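(* Let $G_1=(\{p_j\},\{\mu_j\},\{\sigma_j^2\})_{j=1}^n$ and $G_2=(\{p'_k\},\{\mu'_k\},\{\sigma_k'^2\})_{k=1}^{n'}$ be univariate Gaussian mixtures with all $\sigma_j>0$, $\sigma'_k>0$. Then $$\begin{aligned}C_2^2(G_1,G_2)=&\sum_{j=1}^n\sum_{k=1}^{n'}p_jp'_k\sqrt{\sigma_j^2+\sigma_k'^2}\,\Big[U\Big(\tfrac{\mu_j-\mu'_k}{\sqrt{\sigma_j^2+\sigma_k'^2}}\Big)+U\Big(\tfrac{\mu'_k-\mu_j}{\sqrt{\sigma_j^2+\sigma_k'^2}}\Big)\Big]\\&-\sum_{j=1}^n\sum_{k=1}^n p_jp_k\sqrt{\sigma_j^2+\sigma_k^2}\,U\Big(\tfrac{\mu_j-\mu_k}{\sqrt{\sigma_j^2+\sigma_k^2}}\Big)-\sum_{j=1}^{n'}\sum_{k=1}^{n'}p'_jp'_k\sqrt{\sigma_j'^2+\sigma_k'^2}\,U\Big(\tfrac{\mu'_j-\mu'_k}{\sqrt{\sigma_j'^2+\sigma_k'^2}}\Big).\end{aligned}$$ Equivalently, with $V(x)=\frac{U(x)+U(-x)}{2}$, $$C_2^2(G_1,G_2)=2\sum_{j,k}p_jp'_k\sqrt{\sigma_j^2+\sigma_k'^2}\,V\Big(\tfrac{\mu_j-\mu'_k}{\sqrt{\sigma_j^2+\sigma_k'^2}}\Big)-\sum_{j,k=1}^n p_jp_k\sqrt{\sigma_j^2+\sigma_k^2}\,V\Big(\tfrac{\mu_j-\m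u_k}{\sqrt{\sigma_j^2+\sigma_k^2}}\Big)-\sum_{j,k=1}^{n'}p'_jp'_k\sqrt{\sigma_j'^2+\sigma_k'^2}\,V\Big(\tfrac{\mu'_j-\mu'_k}{\sqrt{\sigma_j'^2+\sigma_k'^2}}\Big).$$
   Context: A univariate Gaussian mixture $G=(\{p_j\},\{\mu_j\},\{\sigma_j^2\})_{j=1}^n$ has $p_j\ge0$, $\sum_jp_j=1$, $\mu_j\in\mathbb{R}$, and CDF $\mathrm{CDF}(G)(x)=\sum_j p_j\Phi((x-\mu_j)/\sigma_j)$, where $\Phi$ is the standard normal CDF. The Cramér 2-distance is $C_2(G_1,G_2)=\left(\int_{\mathbb{R}}|\mathrm{CDF}(G_1)(x)-\mathrm{CDF}(G_2)(x)|^2dx\right)^{1/2}$. $U(x)=x\Phi(x)+\frac{1}{\sqrt{2\pi}}e^{-x^2/2}$. *)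

theory Defs
  imports "HOL-Probability.Probability"
begin

definition Phi :: "real \<Rightarrow> real" where
  "Phi x = (\<integral>t\<in>{..x}. std_normal_density t \<partial>lborel)"

definition mixture_cdf :: "nat \<Rightarrow> (nat \<Rightarrow> real) \<Rightarrow> (nat \<Rightarrow> real) \<Rightarrow> (nat \<Rightarrow> real) \<Rightarrow> real \<Rightarrow> real" where
  "mixture_cdf n p mu sg x = (\<Sum>j<n. p j * Phi ((x - mu j) / sg j))"

definition cramer2 :: "(real \<Rightarrow> real) \<Rightarrow> (real \<Rightarrow> real) \<Rightarrow> real" where
  "cramer2 F1 F2 = sqrt (\<integral>x. \<bar>F1 x - F2 x\<bar> ^ 2 \<partial>lborel)"

definition U :: "real \<Rightarrow> real" where
  "U x = x * Phi x + exp (- (x ^ 2) / 2) / sqrt (2 * pi)"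

definition V :: "real \<Rightarrow> real" where
  "V x = (U x + U (- x)) / 2"

end

theory Submission
  imports Defs "HOL-Real_Asymp.Real_Asymp"
begin

text \<open>
  Pointwise, \<open>\<bar>F\<^sub>1 - F\<^sub>2\<bar>\<^sup>2 = F\<^sub>1 (1 - F\<^sub>2) + F\<^sub>2 (1 - F\<^sub>1) - F\<^sub>1 (1 - F\<^sub>1) - F\<^sub>2 (1 - F\<^sub>2)\<close>,
  and each product expands over the components into terms
  \<open>Phi ((x - m\<^sub>1) / s\<^sub>1) * (1 - Phi ((x - m\<^sub>2) / s\<^sub>2)) = P(X \<le> x < Y)\<close> for independent
  \<open>X \<sim> N(m\<^sub>1, s\<^sub>1\<^sup>2)\<close> and \<open>Y \<sim> N(m\<^sub>2, s\<^sub>2\<^sup>2)\<close>. By Tonelli, integrating over \<open>x\<close>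
  gives \<open>E (Y - X)\<^sup>+\<close>, and \<open>Y - X\<close> is normal with mean \<open>d = m\<^sub>2 - m\<^sub>1\<close> and variance
  \<open>s\<^sup>2 = s\<^sub>1\<^sup>2 + s\<^sub>2\<^sup>2\<close>, so this is \<open>E (d + s W)\<^sup>+ = s U (d / s)\<close> for a standard normal \<open>W\<close>.
\<close>

lemma Phi_eq_integral: "Phi x = (\<integral>t. std_normal_density t * indicator {..x} t \<partial>lborel)"
  unfolding Phi_def set_lebesgue_integral_def by (simp add: mult.commute)

lemma integrable_std_normal_density_indicator [simp]:
  "A \<in> sets borel \<Longrightarrow> integrable lborel (\<lambda>t. std_normal_density t * indicator A t)"
  using integrable_mult_indicator[of A lborel std_normal_density] by (simp add: mult.commute)

lemma one_minus_Phi_eq_integral: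
  "1 - Phi x = (\<integral>t. std_normal_density t * indicator {x<..} t \<partial>lborel)"
proof -
  have "(\<lambda>t. std_normal_density t * indicator {..x} t + std_normal_density t * indicator {x<..} t)
      = std_normal_density"
    by (auto simp: fun_eq_iff split: split_indicator)
  then have "(\<integral>t. std_normal_density t * indicator {..x} t
                + std_normal_density t * indicator {x<..} t \<partial>lborel) = 1"
    using integral_normal_density[of 1 0] by simp
  then show ?thesis
    unfolding Phi_eq_integral by simp
qed

lemma Phi_nonneg: "0 \<le> Phi x"
  unfolding Phi_eq_integral by (rule integral_nonneg_AE) auto

lemma Phi_le_1: "Phi x \<le> 1"
proof -
  have "0 \<le> 1 - Phi x"
    unfolding one_minus_Phi_eq_integral by (rule integral_nonneg_AE) auto
  then show ?thesis by simp
qed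

lemma mono_Phi: "mono Phi"
  unfolding Phi_eq_integral
  by (intro monoI integral_mono) (auto split: split_indicator)

lemma borel_measurable_Phi [measurable]: "Phi \<in> borel_measurable borel"
  using mono_Phi by (rule borel_measurable_mono)

lemma Phi_minus: "Phi (- x) = 1 - Phi x"
proof -
  have "Phi (- x) = (\<integral>t. std_normal_density (- t) * indicator {..- x} (- t) \<partial>lborel)"
    unfolding Phi_eq_integral using lborel_integral_real_affine[of "-1" _ 0] by simp
  also have "\<dots> = (\<integral>t. std_normal_density t * indicator {x..} t \<partial>lborel)"
    by (rule Bochner_Integration.integral_cong) (auto simp: normal_density_def split: split_indicator)
  also have "\<dots> = (\<integral>t. std_normal_density t * indicator {x<..} t \<partial>lborel)"
    by (intro integral_cong_AE) (auto intro!: eventually_mono[OF AE_lborel_singleton[of x]] split: split_indicator)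
  finally show ?thesis
    unfolding one_minus_Phi_eq_integral .
qed

lemma normal_density_affine:
  "0 < s \<Longrightarrow> normal_density m s (m + s * w) = std_normal_density w / s"
  by (simp add: normal_density_def real_sqrt_mult power_mult_distrib field_simps)

lemma nn_integral_normal_density_affine:
  assumes s: "0 < s" and [measurable]: "f \<in> borel_measurable borel"
  shows "(\<integral>\<^sup>+t. ennreal (normal_density m s t) * f t \<partial>lborel)
       = (\<integral>\<^sup>+w. ennreal (std_normal_density w) * f (m + s * w) \<partial>lborel)"
proof -
  have "(\<integral>\<^sup>+t. ennreal (normal_density m s t) * f t \<partial>lborel)
      = ennreal \<bar>s\<bar> * (\<integral>\<^sup>+w. ennreal (normal_density m s (m + s * w)) * f (m + s * w) \<partial>lborel)"
    by (rule nn_integral_real_affine) (use s in auto)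
  also have "\<dots> = (\<integral>\<^sup>+w. ennreal s * (ennreal (std_normal_density w / s) * f (m + s * w)) \<partial>lborel)"
    using s by (subst nn_integral_cmult) (auto simp: normal_density_affine)
  also have "\<dots> = (\<integral>\<^sup>+w. ennreal (std_normal_density w) * f (m + s * w) \<partial>lborel)"
    using s by (intro nn_integral_cong) (simp add: ennreal_mult'[symmetric] mult.assoc[symmetric])
  finally show ?thesis .
qed

lemma Phi_affine_eq_nn_integral:
  assumes "0 < s"
  shows "ennreal (Phi ((x - m) / s)) = (\<integral>\<^sup>+t. ennreal (normal_density m s t) * indicator {..x} t \<partial>lborel)"
proof -
  have "ennreal (Phi ((x - m) / s))
      = (\<integral>\<^sup>+w. ennreal (std_normal_density w * indicator {..(x - m) / s} w) \<partial>lborel)"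
    unfolding Phi_eq_integral by (subst nn_integral_eq_integral) auto
  also have "\<dots> = (\<integral>\<^sup>+w. ennreal (std_normal_density w) * indicator {..x} (m + s * w) \<partial>lborel)"
    using assms by (intro nn_integral_cong) (auto simp: field_simps split: split_indicator)
  finally show ?thesis
    using nn_integral_normal_density_affine[OF assms] by simp
qed

lemma one_minus_Phi_affine_eq_nn_integral:
  assumes "0 < s"
  shows "ennreal (1 - Phi ((x - m) / s)) = (\<integral>\<^sup>+t. ennreal (normal_density m s t) * indicator {x<..} t \<partial>lborel)"
proof -
  have "ennreal (1 - Phi ((x - m) / s))
      = (\<integral>\<^sup>+w. ennreal (std_normal_density w * indicator {(x - m) / s<..} w) \<partial>lborel)"
    unfolding one_minus_Phi_eq_integral by (subst nn_integral_eq_integral) auto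
  also have "\<dots> = (\<integral>\<^sup>+w. ennreal (std_normal_density w) * indicator {x<..} (m + s * w) \<partial>lborel)"
    using assms by (intro nn_integral_cong) (auto simp: field_simps split: split_indicator)
  finally show ?thesis
    using nn_integral_normal_density_affine[OF assms] by simp
qed

lemma integral_Ioi_std_normal_first_moment:
  "(\<integral>w. indicator {c<..} w * (w * std_normal_density w) \<partial>lborel) = std_normal_density c"
proof -
  have "(LBINT w=ereal c..\<infinity>. w * std_normal_density w) = 0 - (- std_normal_density c)"
  proof (rule interval_integral_FTC_integrable)
    fix x
    have "sqrt (pi * 2) * sqrt (pi * 2) = pi * 2" by simp
    then show "((\<lambda>w. - std_normal_density w) has_vector_derivative x * std_normal_density x) (at x)"
      unfolding has_real_derivative_iff_has_vector_derivative[symmetric] std_normal_density_def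
      by (auto intro!: derivative_eq_intros simp: field_simps)
    show "isCont (\<lambda>w. w * std_normal_density w) x"
      unfolding std_normal_density_def by (intro continuous_intros) auto
  next
    have "integrable lborel (\<lambda>w. std_normal_density w * w)"
      using integrable_std_normal_moment[of 1] by simp
    then show "set_integrable lborel (einterval (ereal c) \<infinity>) (\<lambda>w. w * std_normal_density w)"
      unfolding set_integrable_def by (intro integrable_mult_indicator) (auto simp: mult.commute)
  next
    show "(((\<lambda>w. - std_normal_density w) \<circ> real_of_ereal) \<longlongrightarrow> - std_normal_density c) (at_right (ereal c))"
      unfolding ereal_tendsto_simps1 std_normal_density_def
      by (intro tendsto_intros continuous_intros tendsto_within_open) auto
  next
    have "((\<lambda>w::real. - (1 / sqrt (2 * pi) * exp (- w\<^sup>2 / 2))) \<longlongrightarrow> 0) at_top"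
      by real_asymp
    then show "(((\<lambda>w. - std_normal_density w) \<circ> real_of_ereal) \<longlongrightarrow> 0) (at_left \<infinity>)"
      unfolding ereal_tendsto_simps1 std_normal_density_def by simp
  qed simp
  then show ?thesis
    by (simp add: interval_integral_Ioi set_lebesgue_integral_def)
qed

lemma has_bochner_integral_std_normal_pos_part:
  "has_bochner_integral lborel (\<lambda>w. std_normal_density w * max 0 (a + w)) (U a)"
proof -
  have integrand: "(\<lambda>w. std_normal_density w * max 0 (a + w))
      = (\<lambda>w. a * (std_normal_density w * indicator {-a<..} w)
             + indicator {-a<..} w * (w * std_normal_density w))"
  proof
    fix w
    show "std_normal_density w * max 0 (a + w) = a * (std_normal_density w * indicator {-a<..} w)
        + indicator {-a<..} w * (w * std_normal_density w)"
      by (cases "- a < w") (simp_all add: max_def algebra_simps)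
  qed
  have "has_bochner_integral lborel (\<lambda>w. std_normal_density w * indicator {-a<..} w) (1 - Phi (- a))"
    by (simp add: has_bochner_integral_iff one_minus_Phi_eq_integral)
  moreover have "integrable lborel (\<lambda>w. std_normal_density w * w)"
    using integrable_std_normal_moment[of 1] by simp
  then have "has_bochner_integral lborel (\<lambda>w. indicator {-a<..} w * (w * std_normal_density w))
      (std_normal_density (- a))"
    using integrable_mult_indicator[of "{-a<..}" lborel "\<lambda>w. std_normal_density w * w"]
      integral_Ioi_std_normal_first_moment[of "- a"]
    by (simp add: has_bochner_integral_iff ac_simps)
  ultimately have "has_bochner_integral lborel (\<lambda>w. std_normal_density w * max 0 (a + w))
      (a * (1 - Phi (- a)) + std_normal_density (- a))"
    unfolding integrand by (intro has_bochner_integral_add has_bochner_integral_mult_right)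
  also have "a * (1 - Phi (- a)) + std_normal_density (- a) = U a"
    by (simp add: Phi_minus U_def std_normal_density_def)
  finally show ?thesis .
qed

lemma U_nonneg: "0 \<le> U a"
proof -
  have "0 \<le> (\<integral>w. std_normal_density w * max 0 (a + w) \<partial>lborel)"
    by (rule integral_nonneg_AE) simp
  then show ?thesis
    using has_bochner_integral_integral_eq[OF has_bochner_integral_std_normal_pos_part] by simp
qed

text \<open>Since \<open>ennreal\<close> truncates at \<open>0\<close>, \<open>ennreal (a + w)\<close> is the positive part of \<open>a + w\<close>.\<close>

lemma nn_integral_std_normal_pos_part:
  "(\<integral>\<^sup>+w. ennreal (std_normal_density w) * ennreal (a + w) \<partial>lborel) = ennreal (U a)"
proof -
  note pos_part = has_bochner_integral_std_normal_pos_part[of a]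
  have "(\<integral>\<^sup>+w. ennreal (std_normal_density w * max 0 (a + w)) \<partial>lborel)
      = ennreal (\<integral>w. std_normal_density w * max 0 (a + w) \<partial>lborel)"
    using integrable.intros[OF pos_part] by (rule nn_integral_eq_integral) simp
  then show ?thesis
    by (simp add: ennreal_mult ennreal_max_0 has_bochner_integral_integral_eq[OF pos_part])
qed

lemma nn_integral_normal_density_pos_part:
  assumes s: "0 < s"
  shows "(\<integral>\<^sup>+z. ennreal (normal_density d s z) * ennreal z \<partial>lborel) = ennreal (s * U (d / s))"
proof -
  have "(\<integral>\<^sup>+z. ennreal (normal_density d s z) * ennreal z \<partial>lborel)
      = (\<integral>\<^sup>+w. ennreal (std_normal_density w) * ennreal (d + s * w) \<partial>lborel)"
    using s by (rule nn_integral_normal_density_affine) simp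
  also have "\<dots> = (\<integral>\<^sup>+w. ennreal s * (ennreal (std_normal_density w) * ennreal (d / s + w)) \<partial>lborel)"
  proof (intro nn_integral_cong)
    fix w
    have "d + s * w = s * (d / s + w)"
      using s by (simp add: field_simps)
    then have "ennreal (d + s * w) = ennreal s * ennreal (d / s + w)"
      using s by (simp add: ennreal_mult')
    then show "ennreal (std_normal_density w) * ennreal (d + s * w)
        = ennreal s * (ennreal (std_normal_density w) * ennreal (d / s + w))"
      by (metis mult.left_commute)
  qed
  also have "\<dots> = ennreal (s * U (d / s))"
    using s by (simp add: nn_integral_cmult nn_integral_std_normal_pos_part ennreal_mult')
  finally show ?thesis .
qed

lemma nn_integral_lower_times_upper_tail:
  fixes f g :: "real \<Rightarrow> ennreal"
  assumes [measurable]: "f \<in> borel_measurable borel" "g \<in> borel_measurable borel"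
  shows "(\<integral>\<^sup>+x. (\<integral>\<^sup>+t. f t * indicator {..x} t \<partial>lborel) * (\<integral>\<^sup>+u. g u * indicator {x<..} u \<partial>lborel) \<partial>lborel)
       = (\<integral>\<^sup>+t. \<integral>\<^sup>+u. f t * g u * ennreal (u - t) \<partial>lborel \<partial>lborel)"
proof -
  have "(\<integral>\<^sup>+x. (\<integral>\<^sup>+t. f t * indicator {..x} t \<partial>lborel) * (\<integral>\<^sup>+u. g u * indicator {x<..} u \<partial>lborel) \<partial>lborel)
      = (\<integral>\<^sup>+x. \<integral>\<^sup>+t. \<integral>\<^sup>+u. (if t \<le> x \<and> x < u then f t * g u else 0) \<partial>lborel \<partial>lborel \<partial>lborel)"
  proof (intro nn_integral_cong)
    fix x
    have "(\<integral>\<^sup>+t. f t * indicator {..x} t \<partial>lborel) * (\<integral>\<^sup>+u. g u * indicator {x<..} u \<partial>lborel)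
        = (\<integral>\<^sup>+t. \<integral>\<^sup>+u. f t * indicator {..x} t * (g u * indicator {x<..} u) \<partial>lborel \<partial>lborel)"
      by (subst nn_integral_multc[symmetric], simp)
         (intro nn_integral_cong nn_integral_cmult[symmetric], simp)
    also have "\<dots> = (\<integral>\<^sup>+t. \<integral>\<^sup>+u. (if t \<le> x \<and> x < u then f t * g u else 0) \<partial>lborel \<partial>lborel)"
      by (intro nn_integral_cong) (auto split: split_indicator)
    finally show "(\<integral>\<^sup>+t. f t * indicator {..x} t \<partial>lborel) * (\<integral>\<^sup>+u. g u * indicator {x<..} u \<partial>lborel)
        = (\<integral>\<^sup>+t. \<integral>\<^sup>+u. (if t \<le> x \<and> x < u then f t * g u else 0) \<partial>lborel \<partial>lborel)" .
  qed
  also have "\<dots> = (\<integral>\<^sup>+t. \<integral>\<^sup>+x. \<integral>\<^sup>+u. (if t \<le> x \<and> x < u then f t * g u else 0) \<partial>lborel \<partial>lborel \<partial>lborel)"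
    by (rule lborel_pair.Fubini') simp
  also have "\<dots> = (\<integral>\<^sup>+t. \<integral>\<^sup>+u. \<integral>\<^sup>+x. (if t \<le> x \<and> x < u then f t * g u else 0) \<partial>lborel \<partial>lborel \<partial>lborel)"
    by (intro nn_integral_cong lborel_pair.Fubini') simp
  also have "\<dots> = (\<integral>\<^sup>+t. \<integral>\<^sup>+u. f t * g u * ennreal (u - t) \<partial>lborel \<partial>lborel)"
  proof (intro nn_integral_cong)
    fix t u
    have "(\<integral>\<^sup>+x. (if t \<le> x \<and> x < u then f t * g u else 0) \<partial>lborel)
        = (\<integral>\<^sup>+x. f t * g u * indicator {t..<u} x \<partial>lborel)"
      by (intro nn_integral_cong) (simp split: split_indicator)
    then show "(\<integral>\<^sup>+x. (if t \<le> x \<and> x < u then f t * g u else 0) \<partial>lborel)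
        = f t * g u * ennreal (u - t)"
      by (cases "t \<le> u") (simp_all add: nn_integral_cmult_indicator ennreal_neg)
  qed
  finally show ?thesis .
qed

lemma nn_integral_normal_density_times_shifted:
  assumes "0 < s1" "0 < s2"
  shows "(\<integral>\<^sup>+t. ennreal (normal_density m1 s1 t) * ennreal (normal_density m2 s2 (t + z)) \<partial>lborel)
     = ennreal (normal_density (m2 - m1) (sqrt (s1\<^sup>2 + s2\<^sup>2)) z)"
proof -
  have "(\<integral>\<^sup>+t. ennreal (normal_density m1 s1 t) * ennreal (normal_density m2 s2 (t + z)) \<partial>lborel)
     = ennreal \<bar>1\<bar> * (\<integral>\<^sup>+y. ennreal (normal_density m1 s1 (m1 + 1 * y))
                                * ennreal (normal_density m2 s2 (m1 + 1 * y + z)) \<partial>lborel)"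
    by (rule nn_integral_real_affine) auto
  also have "\<dots> = (\<integral>\<^sup>+y. ennreal (normal_density 0 s2 ((m2 - m1 - z) - y) * normal_density 0 s1 y) \<partial>lborel)"
    by (simp, intro nn_integral_cong)
       (simp add: ennreal_mult'[symmetric] normal_density_def power2_commute algebra_simps)
  also have "\<dots> = ennreal (normal_density 0 (sqrt (s2\<^sup>2 + s1\<^sup>2)) (m2 - m1 - z))"
    using conv_normal_density_zero_mean[OF assms(2,1)] by (simp add: fun_eq_iff)
  also have "\<dots> = ennreal (normal_density (m2 - m1) (sqrt (s1\<^sup>2 + s2\<^sup>2)) z)"
    by (simp add: normal_density_def power2_commute add.commute)
  finally show ?thesis .
qed

lemma nn_integral_normal_density_difference:
  assumes "0 < s1" "0 < s2" and [measurable]: "h \<in> borel_measurable borel"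
  shows "(\<integral>\<^sup>+t. \<integral>\<^sup>+u. ennreal (normal_density m1 s1 t) * ennreal (normal_density m2 s2 u) * h (u - t)
            \<partial>lborel \<partial>lborel)
       = (\<integral>\<^sup>+z. ennreal (normal_density (m2 - m1) (sqrt (s1\<^sup>2 + s2\<^sup>2)) z) * h z \<partial>lborel)"
proof -
  have "(\<integral>\<^sup>+t. \<integral>\<^sup>+u. ennreal (normal_density m1 s1 t) * ennreal (normal_density m2 s2 u) * h (u - t)
            \<partial>lborel \<partial>lborel)
      = (\<integral>\<^sup>+t. \<integral>\<^sup>+z. ennreal (normal_density m1 s1 t) * ennreal (normal_density m2 s2 (t + z)) * h z
            \<partial>lborel \<partial>lborel)"
  proof (rule nn_integral_cong)
    fix t
    show "(\<integral>\<^sup>+u. ennreal (normal_density m1 s1 t) * ennreal (normal_density m2 s2 u) * h (u - t) \<partial>lborel)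
        = (\<integral>\<^sup>+z. ennreal (normal_density m1 s1 t) * ennreal (normal_density m2 s2 (t + z)) * h z \<partial>lborel)"
      using nn_integral_real_affine[of
          "\<lambda>u. ennreal (normal_density m1 s1 t) * ennreal (normal_density m2 s2 u) * h (u - t)" 1 t]
      by simp
  qed
  also have "\<dots> = (\<integral>\<^sup>+z. \<integral>\<^sup>+t. ennreal (normal_density m1 s1 t) * ennreal (normal_density m2 s2 (t + z)) * h z
            \<partial>lborel \<partial>lborel)"
    by (rule lborel_pair.Fubini'[symmetric]) simp
  also have "\<dots> = (\<integral>\<^sup>+z. (\<integral>\<^sup>+t. ennreal (normal_density m1 s1 t) * ennreal (normal_density m2 s2 (t + z))
            \<partial>lborel) * h z \<partial>lborel)"
    by (intro nn_integral_cong nn_integral_multc) simp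
  finally show ?thesis
    unfolding nn_integral_normal_density_times_shifted[OF assms(1,2)] .
qed

lemma nn_integral_Phi_times_one_minus_Phi:
  assumes s1: "0 < s1" and s2: "0 < s2"
  shows "(\<integral>\<^sup>+x. ennreal (Phi ((x - m1) / s1) * (1 - Phi ((x - m2) / s2))) \<partial>lborel)
       = ennreal (sqrt (s1\<^sup>2 + s2\<^sup>2) * U ((m2 - m1) / sqrt (s1\<^sup>2 + s2\<^sup>2)))"
proof -
  have "(\<integral>\<^sup>+x. ennreal (Phi ((x - m1) / s1) * (1 - Phi ((x - m2) / s2))) \<partial>lborel)
      = (\<integral>\<^sup>+x. (\<integral>\<^sup>+t. ennreal (normal_density m1 s1 t) * indicator {..x} t \<partial>lborel)
             * (\<integral>\<^sup>+u. ennreal (normal_density m2 s2 u) * indicator {x<..} u \<partial>lborel) \<partial>lborel)"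
    by (intro nn_integral_cong) (simp add: ennreal_mult Phi_nonneg Phi_le_1
        Phi_affine_eq_nn_integral[OF s1] one_minus_Phi_affine_eq_nn_integral[OF s2])
  also have "\<dots> = (\<integral>\<^sup>+t. \<integral>\<^sup>+u. ennreal (normal_density m1 s1 t) * ennreal (normal_density m2 s2 u)
                      * ennreal (u - t) \<partial>lborel \<partial>lborel)"
    by (rule nn_integral_lower_times_upper_tail) simp_all
  also have "\<dots> = (\<integral>\<^sup>+z. ennreal (normal_density (m2 - m1) (sqrt (s1\<^sup>2 + s2\<^sup>2)) z) * ennreal z \<partial>lborel)"
    using s1 s2 by (rule nn_integral_normal_density_difference) simp
  also have "\<dots> = ennreal (sqrt (s1\<^sup>2 + s2\<^sup>2) * U ((m2 - m1) / sqrt (s1\<^sup>2 + s2\<^sup>2)))"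
    using s1 by (intro nn_integral_normal_density_pos_part) (simp add: add_pos_nonneg)
  finally show ?thesis .
qed

lemma has_bochner_integral_Phi_times_one_minus_Phi:
  assumes "0 < s1" "0 < s2"
  shows "has_bochner_integral lborel (\<lambda>x. Phi ((x - m1) / s1) * (1 - Phi ((x - m2) / s2)))
           (sqrt (s1\<^sup>2 + s2\<^sup>2) * U ((m2 - m1) / sqrt (s1\<^sup>2 + s2\<^sup>2)))"
  by (rule has_bochner_integral_nn_integral)
     (simp_all add: Phi_nonneg Phi_le_1 U_nonneg nn_integral_Phi_times_one_minus_Phi[OF assms])

definition mixture_cross_term ::
    "nat \<Rightarrow> (nat \<Rightarrow> real) \<Rightarrow> (nat \<Rightarrow> real) \<Rightarrow> (nat \<Rightarrow> real)
      \<Rightarrow> nat \<Rightarrow> (nat \<Rightarrow> real) \<Rightarrow> (nat \<Rightarrow> real) \<Rightarrow> (nat \<Rightarrow> real) \<Rightarrow> real" where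
  "mixture_cross_term n p mu sg n' p' mu' sg' =
     (\<Sum>j<n. \<Sum>k<n'. p j * p' k * sqrt (sg j ^ 2 + sg' k ^ 2)
                      * U ((mu' k - mu j) / sqrt (sg j ^ 2 + sg' k ^ 2)))"

lemma one_minus_mixture_cdf:
  "(\<Sum>k<n. p k) = 1 \<Longrightarrow> 1 - mixture_cdf n p mu sg x = (\<Sum>k<n. p k * (1 - Phi ((x - mu k) / sg k)))"
  by (simp add: mixture_cdf_def sum_subtractf right_diff_distrib)

lemma has_bochner_integral_mixture_cdf_times_one_minus:
  assumes "\<And>j. j < n \<Longrightarrow> 0 < sg j" and "\<And>k. k < n' \<Longrightarrow> 0 < sg' k" and "(\<Sum>k<n'. p' k) = 1"
  shows "has_bochner_integral lborel (\<lambda>x. mixture_cdf n p mu sg x * (1 - mixture_cdf n' p' mu' sg' x))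
           (mixture_cross_term n p mu sg n' p' mu' sg')"
proof -
  have expand: "(\<lambda>x. mixture_cdf n p mu sg x * (1 - mixture_cdf n' p' mu' sg' x))
      = (\<lambda>x. \<Sum>j<n. \<Sum>k<n'. p j * p' k * (Phi ((x - mu j) / sg j) * (1 - Phi ((x - mu' k) / sg' k))))"
    unfolding one_minus_mixture_cdf[OF assms(3)] by (simp add: mixture_cdf_def sum_product ac_simps)
  show ?thesis
    unfolding expand mixture_cross_term_def mult.assoc[of "p _ * p' _"]
    by (intro has_bochner_integral_sum has_bochner_integral_mult_right
        has_bochner_integral_Phi_times_one_minus_Phi) (simp_all add: assms)
qed

lemma mixture_cross_term_swap:
  "mixture_cross_term n' p' mu' sg' n p mu sg
     = (\<Sum>j<n. \<Sum>k<n'. p j * p' k * sqrt (sg j ^ 2 + sg' k ^ 2)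
                      * U ((mu j - mu' k) / sqrt (sg j ^ 2 + sg' k ^ 2)))"
  unfolding mixture_cross_term_def by (subst sum.swap) (simp add: ac_simps)

lemma cramer2_mixture_cdf_squared:
  assumes "\<And>j. j < n \<Longrightarrow> 0 < sg j" and "(\<Sum>j<n. p j) = 1"
    and "\<And>k. k < n' \<Longrightarrow> 0 < sg' k" and "(\<Sum>k<n'. p' k) = 1"
  shows "cramer2 (mixture_cdf n p mu sg) (mixture_cdf n' p' mu' sg') ^ 2
       = mixture_cross_term n p mu sg n' p' mu' sg' + mixture_cross_term n' p' mu' sg' n p mu sg
         - mixture_cross_term n p mu sg n p mu sg - mixture_cross_term n' p' mu' sg' n' p' mu' sg'"
proof -
  let ?F = "mixture_cdf n p mu sg" and ?G = "mixture_cdf n' p' mu' sg'"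
  have square_expansion: "\<And>x. \<bar>?F x - ?G x\<bar> ^ 2
      = ?F x * (1 - ?G x) + ?G x * (1 - ?F x) - ?F x * (1 - ?F x) - ?G x * (1 - ?G x)"
    by (simp add: power2_eq_square algebra_simps)
  have "has_bochner_integral lborel (\<lambda>x. \<bar>?F x - ?G x\<bar> ^ 2)
      (mixture_cross_term n p mu sg n' p' mu' sg' + mixture_cross_term n' p' mu' sg' n p mu sg
       - mixture_cross_term n p mu sg n p mu sg - mixture_cross_term n' p' mu' sg' n' p' mu' sg')"
    unfolding square_expansion
    by (intro has_bochner_integral_diff has_bochner_integral_add
        has_bochner_integral_mixture_cdf_times_one_minus) (simp_all add: assms)
  moreover have "0 \<le> (\<integral>x. \<bar>?F x - ?G x\<bar> ^ 2 \<partial>lborel)"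
    by (rule integral_nonneg_AE) simp
  ultimately show ?thesis
    unfolding cramer2_def by (simp add: has_bochner_integral_integral_eq)
qed

lemma sum_sum_V_eq_sum_sum_U:
  fixes n :: nat
  shows "(\<Sum>j<n. \<Sum>k<n. p j * p k * sqrt (sg j ^ 2 + sg k ^ 2) * V ((mu j - mu k) / sqrt (sg j ^ 2 + sg k ^ 2)))
   = (\<Sum>j<n. \<Sum>k<n. p j * p k * sqrt (sg j ^ 2 + sg k ^ 2) * U ((mu j - mu k) / sqrt (sg j ^ 2 + sg k ^ 2)))"
    (is "?V = ?U")
proof -
  let ?U' = "\<Sum>j<n. \<Sum>k<n. p j * p k * sqrt (sg j ^ 2 + sg k ^ 2) * U (- ((mu j - mu k) / sqrt (sg j ^ 2 + sg k ^ 2)))"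
  have "2 * ?V = ?U + ?U'"
    unfolding V_def sum_distrib_left sum.distrib[symmetric] by (intro sum.cong refl) (simp add: field_simps)
  moreover have "?U' = ?U"
    using mixture_cross_term_swap[of n p mu sg n p mu sg]
    unfolding mixture_cross_term_def by (simp add: minus_divide_left)
  ultimately show ?thesis by simp
qed

theorem mainTheorem4:
  fixes n n' :: nat and p mu sg p' mu' sg' :: "nat \<Rightarrow> real"
  assumes "\<And>j. j < n \<Longrightarrow> p j \<ge> 0" and "(\<Sum>j<n. p j) = 1"
    and "\<And>j. j < n \<Longrightarrow> sg j > 0"
    and "\<And>k. k < n' \<Longrightarrow> p' k \<ge> 0" and "(\<Sum>k<n'. p' k) = 1"
    and "\<And>k. k < n' \<Longrightarrow> sg' k > 0"
  shows "(cramer2 (mixture_cdf n p mu sg) (mixture_cdf n' p' mu' sg')) ^ 2 =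
      (\<Sum>j<n. \<Sum>k<n'. p j * p' k * sqrt (sg j ^ 2 + sg' k ^ 2) *
          (U ((mu j - mu' k) / sqrt (sg j ^ 2 + sg' k ^ 2))
           + U ((mu' k - mu j) / sqrt (sg j ^ 2 + sg' k ^ 2))))
    - (\<Sum>j<n. \<Sum>k<n. p j * p k * sqrt (sg j ^ 2 + sg k ^ 2) *
          U ((mu j - mu k) / sqrt (sg j ^ 2 + sg k ^ 2)))
    - (\<Sum>j<n'. \<Sum>k<n'. p' j * p' k * sqrt (sg' j ^ 2 + sg' k ^ 2) *
          U ((mu' j - mu' k) / sqrt (sg' j ^ 2 + sg' k ^ 2)))
   \<and> (cramer2 (mixture_cdf n p mu sg) (mixture_cdf n' p' mu' sg')) ^ 2 =
      2 * (\<Sum>j<n. \<Sum>k<n'. p j * p' k * sqrt (sg j ^ 2 + sg' k ^ 2) *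
          V ((mu j - mu' k) / sqrt (sg j ^ 2 + sg' k ^ 2)))
    - (\<Sum>j<n. \<Sum>k<n. p j * p k * sqrt (sg j ^ 2 + sg k ^ 2) *
          V ((mu j - mu k) / sqrt (sg j ^ 2 + sg k ^ 2)))
    - (\<Sum>j<n'. \<Sum>k<n'. p' j * p' k * sqrt (sg' j ^ 2 + sg' k ^ 2) *
          V ((mu' j - mu' k) / sqrt (sg' j ^ 2 + sg' k ^ 2)))"
proof -
  have cross_U: "(\<Sum>j<n. \<Sum>k<n'. p j * p' k * sqrt (sg j ^ 2 + sg' k ^ 2) *
          (U ((mu j - mu' k) / sqrt (sg j ^ 2 + sg' k ^ 2))
           + U ((mu' k - mu j) / sqrt (sg j ^ 2 + sg' k ^ 2))))
      = mixture_cross_term n p mu sg n' p' mu' sg' + mixture_cross_term n' p' mu' sg' n p mu sg"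
    unfolding mixture_cross_term_swap[of n' p' mu' sg' n p mu sg]
    unfolding mixture_cross_term_def
    by (simp add: distrib_left sum.distrib)
  have cross_V: "2 * (\<Sum>j<n. \<Sum>k<n'. p j * p' k * sqrt (sg j ^ 2 + sg' k ^ 2) *
          V ((mu j - mu' k) / sqrt (sg j ^ 2 + sg' k ^ 2)))
      = mixture_cross_term n p mu sg n' p' mu' sg' + mixture_cross_term n' p' mu' sg' n p mu sg"
    unfolding cross_U[symmetric] V_def sum_distrib_left
    by (intro sum.cong refl) (simp add: minus_divide_left field_simps)
  show ?thesis
    unfolding cross_U cross_V sum_sum_V_eq_sum_sum_U
      mixture_cross_term_swap[of n p mu sg n p mu sg, symmetric]
      mixture_cross_term_swap[of n' p' mu' sg' n' p' mu' sg', symmetric]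
    using cramer2_mixture_cdf_squared[OF assms(3,2,6,5)] by simp
qed

end
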